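(* Let $X$ be a non-empty set, let $a\notin X$, and let $G$ be the free group on $X\cup\{a\}$. For each $y\in X$ let $\psi_y$ be the endomorphism of $G$ with $\psi_y(y)=a$, $\psi_y(a)=1$ and $\psi_y(x)=1$ for $x\in X\setminus\{y\}$, and define $g\circ_y h=g\cdot\psi_y(g)\cdot h\cdot\psi_y(g)^{-1}$. Then $(\circ_y:y\in X)$ is a brace block on $G$ and the operations $\circ_y$, $y\in X$, are pairwise distinct: $x\circ_y x=x\cdot x$ for $x\in X\setminus\{y\}$, while $y\circ_y y=y\cdot a\cdot y\cdot a^{-1}\ne y\cdot y$.
   Context: A skew brace is a triple $(G,\cdot,\circ)$ where $(G,\cdot)$ and $(G,\circ)$ are groups and $g\circ(h\cdot k)=(g\circ h)\cdot g^{-1}\cdot(g\circ k)$ for all $g,h,k$. A bi-skew brace is a triple $(G,\cdot,\circ)$ such that both $(G,\cdot,\circ)$ and $(G,\circ,\cdot)$ are skew braces. A brace block on a set $G$ is a family of group operations on $G$ any two of which form a bi-skew brace. *)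

theory Defs
  imports "HOL-Algebra.Group"
begin

text \<open>A letter is a pair (inverted?, generator). A word is a list of letters.\<close>
type_synonym 'x word = "(bool \<times> 'x) list"

definition cancels :: "bool \<times> 'x \<Rightarrow> bool \<times> 'x \<Rightarrow> bool" where
  "cancels p q \<longleftrightarrow> snd p = snd q \<and> fst p \<noteq> fst q"

fun reduced :: "'x word \<Rightarrow> bool" where
  "reduced [] = True"
| "reduced [p] = True"
| "reduced (p # q # ws) = (\<not> cancels p q \<and> reduced (q # ws))"

definition red_cons :: "bool \<times> 'x \<Rightarrow> 'x word \<Rightarrow> 'x word" where
  "red_cons p ws = (case ws of [] \<Rightarrow> [p] | q # qs \<Rightarrow> if cancels p q then qs else p # ws)"

definition reduce :: "'x word \<Rightarrow> 'x word" where
  "reduce ws = foldr red_cons ws []"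

definition free_grp :: "'x set \<Rightarrow> 'x word monoid" where
  "free_grp S = \<lparr> carrier = {ws. reduced ws \<and> snd ` set ws \<subseteq> S},
                  mult = (\<lambda>g h. reduce (g @ h)), one = [] \<rparr>"

definition gen :: "'x \<Rightarrow> 'x word" where
  "gen x = [(False, x)]"

definition psi :: "'x \<Rightarrow> 'x \<Rightarrow> 'x word \<Rightarrow> 'x word" where
  "psi a y w = reduce (concat (map (\<lambda>(b, x). if x = y then [(b, a)] else []) w))"

definition grp_of :: "'g set \<Rightarrow> ('g \<Rightarrow> 'g \<Rightarrow> 'g) \<Rightarrow> 'g monoid" where
  "grp_of S f = \<lparr> carrier = S, mult = f,
      one = (THE e. e \<in> S \<and> (\<forall>x\<in>S. f e x = x \<and> f x e = x)) \<rparr>"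

definition is_group_op :: "'g set \<Rightarrow> ('g \<Rightarrow> 'g \<Rightarrow> 'g) \<Rightarrow> bool" where
  "is_group_op S f \<longleftrightarrow> group (grp_of S f)"

definition skew_brace :: "'g set \<Rightarrow> ('g \<Rightarrow> 'g \<Rightarrow> 'g) \<Rightarrow> ('g \<Rightarrow> 'g \<Rightarrow> 'g) \<Rightarrow> bool" where
  "skew_brace S dot circ \<longleftrightarrow> is_group_op S dot \<and> is_group_op S circ \<and>
     (\<forall>g\<in>S. \<forall>h\<in>S. \<forall>k\<in>S.
        circ g (dot h k) = dot (dot (circ g h) (inv\<^bsub>grp_of S dot\<^esub> g)) (circ g k))"

definition bi_skew_brace :: "'g set \<Rightarrow> ('g \<Rightarrow> 'g \<Rightarrow> 'g) \<Rightarrow> ('g \<Rightarrow> 'g \<Rightarrow> 'g) \<Rightarrow> bool" where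
  "bi_skew_brace S dot circ \<longleftrightarrow> skew_brace S dot circ \<and> skew_brace S circ dot"

definition brace_block :: "'g set \<Rightarrow> 'i set \<Rightarrow> ('i \<Rightarrow> 'g \<Rightarrow> 'g \<Rightarrow> 'g) \<Rightarrow> bool" where
  "brace_block S I ops \<longleftrightarrow> (\<forall>i\<in>I. is_group_op S (ops i)) \<and>
     (\<forall>i\<in>I. \<forall>j\<in>I. bi_skew_brace S (ops i) (ops j))"

end

theory Submission
  imports Defs
begin

text \<open>The operation \<open>g \<circ>\<^sub>y h = g \<psi>\<^sub>y(g) h \<psi>\<^sub>y(g)\<inverse>\<close> makes sense for any endomorphism \<open>\<psi>\<close> of
  any group. If \<open>\<psi> \<circ> \<psi>\<close> is trivial then \<open>\<psi>\<close> is a homomorphism from \<open>\<circ>\<close> to the original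
  product, which makes \<open>\<circ>\<close> associative with inverse \<open>\<psi>(g)\<inverse> g\<inverse> \<psi>(g)\<close>. For a family of such
  endomorphisms with \<open>\<psi>\<^sub>i \<circ> \<psi>\<^sub>j\<close> trivial and pairwise commuting images, the skew brace
  identity between any two of the operations reduces to a word identity in which only
  the commutations \<open>\<psi>\<^sub>i(g) \<psi>\<^sub>i(h) = \<psi>\<^sub>i(h) \<psi>\<^sub>i(g)\<close> and \<open>\<psi>\<^sub>i(h) \<psi>\<^sub>j(g) = \<psi>\<^sub>j(g) \<psi>\<^sub>i(h)\<close> are used.
  In the free group all \<open>\<psi>\<^sub>y\<close> take values in the cyclic group generated by \<open>a\<close>, which \<open>\<psi>\<^sub>y\<close>
  kills since \<open>a \<noteq> y\<close>; so the hypotheses hold.\<close>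

section \<open>Reduction of words\<close>

lemma reduced_ConsD: "reduced (p # ws) \<Longrightarrow> reduced ws"
  by (cases ws) auto

lemma reduced_red_cons: "reduced ws \<Longrightarrow> reduced (red_cons p ws)"
  by (cases ws) (auto simp: red_cons_def dest: reduced_ConsD)

lemma reduced_foldr_red_cons: "reduced zs \<Longrightarrow> reduced (foldr red_cons w zs)"
  by (induction w) (auto intro: reduced_red_cons)

lemma reduced_reduce: "reduced (reduce ws)"
  unfolding reduce_def by (rule reduced_foldr_red_cons) simp

lemma reduce_Cons: "reduce (p # ws) = red_cons p (reduce ws)"
  by (simp add: reduce_def)

lemma reduce_append: "reduce (xs @ ys) = foldr red_cons xs (reduce ys)"
  by (simp add: reduce_def)

lemma reduce_reduced_eq: "reduced ws \<Longrightarrow> reduce ws = ws"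
proof (induction ws)
  case Nil
  then show ?case by (simp add: reduce_def)
next
  case (Cons p ws)
  then have "reduce ws = ws" using reduced_ConsD by blast
  then show ?case using Cons.prems by (cases ws) (auto simp: reduce_Cons red_cons_def)
qed

lemma set_red_cons_subset: "set (red_cons p ws) \<subseteq> insert p (set ws)"
  by (cases ws) (auto simp: red_cons_def)

lemma set_foldr_red_cons_subset: "set (foldr red_cons w zs) \<subseteq> set w \<union> set zs"
  by (induction w) (use set_red_cons_subset in fastforce)+

lemma set_reduce_subset: "set (reduce ws) \<subseteq> set ws"
  using set_foldr_red_cons_subset[of ws "[]"] by (simp add: reduce_def)

lemma red_cons_cancel: "cancels p q \<Longrightarrow> reduced v \<Longrightarrow> red_cons p (red_cons q v) = v"
proof (cases v)
  case Nil
  assume "cancels p q"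
  then show ?thesis using Nil by (simp add: red_cons_def)
next
  case (Cons r v')
  assume pq: "cancels p q" and v: "reduced v"
  show ?thesis
  proof (cases "cancels q r")
    case True
    then have "p = r" using pq by (cases p; cases q; cases r) (auto simp: cancels_def)
    moreover have "\<not> (case v' of [] \<Rightarrow> False | s # _ \<Rightarrow> cancels r s)"
      using v Cons by (cases v') auto
    ultimately show ?thesis using Cons True by (cases v') (auto simp: red_cons_def)
  next
    case False
    then show ?thesis using Cons pq by (simp add: red_cons_def)
  qed
qed

lemma red_cons_foldr_red_cons:
  assumes "reduced u" "reduced zs"
  shows "red_cons p (foldr red_cons u zs) = foldr red_cons (red_cons p u) zs"
proof (cases u)
  case Nil
  then show ?thesis by (simp add: red_cons_def)
next
  case (Cons q w)
  show ?thesis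
  proof (cases "cancels p q")
    case True
    have "reduced (foldr red_cons w zs)" using assms reduced_foldr_red_cons by blast
    then show ?thesis using True Cons red_cons_cancel by (simp add: red_cons_def[of p "q # w"])
  next
    case False
    then show ?thesis using Cons by (simp add: red_cons_def)
  qed
qed

lemma foldr_red_cons_reduce: "reduced zs \<Longrightarrow> foldr red_cons (reduce w) zs = foldr red_cons w zs"
proof (induction w)
  case Nil
  then show ?case by (simp add: reduce_def)
next
  case (Cons p w)
  have "foldr red_cons (reduce (p # w)) zs = red_cons p (foldr red_cons (reduce w) zs)"
    using red_cons_foldr_red_cons[OF reduced_reduce Cons.prems] by (simp add: reduce_Cons)
  then show ?case using Cons by simp
qed

lemma reduce_reduce_append: "reduce (reduce xs @ ys) = reduce (xs @ ys)"
  by (simp add: reduce_append foldr_red_cons_reduce reduced_reduce)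

lemma reduce_append_reduce: "reduce (xs @ reduce ys) = reduce (xs @ ys)"
  by (simp add: reduce_append reduce_reduced_eq reduced_reduce)

definition flip_letter :: "bool \<times> 'x \<Rightarrow> bool \<times> 'x" where
  "flip_letter p = (\<not> fst p, snd p)"

lemma foldr_red_cons_inverse_word:
  "reduced zs \<Longrightarrow> foldr red_cons (rev (map flip_letter w)) (foldr red_cons w zs) = zs"
proof (induction w arbitrary: zs)
  case Nil
  then show ?case by simp
next
  case (Cons p w)
  have "reduced (foldr red_cons w zs)" using Cons.prems reduced_foldr_red_cons by blast
  then show ?case using Cons by (simp add: red_cons_cancel cancels_def flip_letter_def)
qed

section \<open>The free group\<close>

lemma free_grp_simps:
  "carrier (free_grp S) = {ws. reduced ws \<and> snd ` set ws \<subseteq> S}"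
  "x \<otimes>\<^bsub>free_grp S\<^esub> y = reduce (x @ y)"
  "\<one>\<^bsub>free_grp S\<^esub> = []"
  by (simp_all add: free_grp_def)

lemma group_free_grp: "group (free_grp S)"
proof (rule groupI)
  fix x y
  assume "x \<in> carrier (free_grp S)" "y \<in> carrier (free_grp S)"
  then show "x \<otimes>\<^bsub>free_grp S\<^esub> y \<in> carrier (free_grp S)"
    using set_reduce_subset[of "x @ y"] by (fastforce simp: free_grp_simps reduced_reduce)
next
  fix x assume x: "x \<in> carrier (free_grp S)"
  let ?y = "reduce (rev (map flip_letter x))"
  have "?y \<in> carrier (free_grp S)"
    using x set_reduce_subset[of "rev (map flip_letter x)"]
    by (fastforce simp: free_grp_simps reduced_reduce flip_letter_def)
  moreover have "?y \<otimes>\<^bsub>free_grp S\<^esub> x = \<one>\<^bsub>free_grp S\<^esub>"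
    using x foldr_red_cons_inverse_word[of "[]" x]
    by (simp add: free_grp_simps reduce_reduce_append reduce_append reduce_def[symmetric]
        reduce_reduced_eq foldr_red_cons_reduce)
  ultimately show "\<exists>y\<in>carrier (free_grp S). y \<otimes>\<^bsub>free_grp S\<^esub> x = \<one>\<^bsub>free_grp S\<^esub>" by blast
qed (simp_all add: free_grp_simps reduce_reduce_append reduce_append_reduce reduce_reduced_eq)

lemma gen_in_free_grp: "x \<in> S \<Longrightarrow> gen x \<in> carrier (free_grp S)"
  by (simp add: free_grp_simps gen_def)

lemma inv_gen_free_grp: "a \<in> S \<Longrightarrow> inv\<^bsub>free_grp S\<^esub> (gen a) = [(True, a)]"
  by (rule group.inv_equality[OF group_free_grp])
    (simp_all add: free_grp_simps gen_def reduce_def red_cons_def cancels_def)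

lemma reduced_word_in_letter_is_pow:
  assumes a: "a \<in> S"
  shows "reduced w \<Longrightarrow> snd ` set w \<subseteq> {a} \<Longrightarrow> \<exists>n::int. w = gen a [^]\<^bsub>free_grp S\<^esub> n"
proof (induction w)
  case Nil
  interpret group "free_grp S" by (rule group_free_grp)
  have "[] = gen a [^]\<^bsub>free_grp S\<^esub> (0::int)" by (simp add: free_grp_simps)
  then show ?case by blast
next
  case (Cons p w)
  interpret group "free_grp S" by (rule group_free_grp)
  have ga: "gen a \<in> carrier (free_grp S)" using a by (rule gen_in_free_grp)
  have "reduced w" using Cons.prems(1) by (rule reduced_ConsD)
  moreover have "snd ` set w \<subseteq> {a}" using Cons.prems(2) by auto
  ultimately obtain n :: int where n: "w = gen a [^]\<^bsub>free_grp S\<^esub> n" using Cons.IH by blast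
  obtain b where p: "p = (b, a)" using Cons.prems(2) by (cases p) (auto simp: image_subset_iff)
  have "[p] = gen a [^]\<^bsub>free_grp S\<^esub> (if b then -1 else 1 :: int)"
    using ga inv_gen_free_grp[OF a] p by (simp add: int_pow_neg gen_def)
  moreover have "p # w = [p] \<otimes>\<^bsub>free_grp S\<^esub> w"
    using Cons.prems(1) reduce_reduced_eq[of "p # w"] by (simp add: free_grp_simps)
  ultimately have "p # w = gen a [^]\<^bsub>free_grp S\<^esub> ((if b then -1 else 1) + n)"
    using n ga by (simp add: int_pow_mult)
  then show ?case by blast
qed

lemma words_in_letter_commute:
  assumes a: "a \<in> S"
    and u: "reduced u" "snd ` set u \<subseteq> {a}" and v: "reduced v" "snd ` set v \<subseteq> {a}"
  shows "u \<otimes>\<^bsub>free_grp S\<^esub> v = v \<otimes>\<^bsub>free_grp S\<^esub> u"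
proof -
  interpret group "free_grp S" by (rule group_free_grp)
  obtain m n :: int where "u = gen a [^]\<^bsub>free_grp S\<^esub> m" "v = gen a [^]\<^bsub>free_grp S\<^esub> n"
    using reduced_word_in_letter_is_pow[OF a] u v by metis
  then show ?thesis using gen_in_free_grp[OF a] by (simp add: int_pow_mult[symmetric] add.commute)
qed

section \<open>The endomorphisms \<open>\<psi>\<close>\<close>

definition psi_word :: "'x \<Rightarrow> 'x \<Rightarrow> 'x word \<Rightarrow> 'x word" where
  "psi_word a y w = concat (map (\<lambda>(b, x). if x = y then [(b, a)] else []) w)"

lemma psi_eq_reduce_psi_word: "psi a y w = reduce (psi_word a y w)"
  by (simp add: psi_def psi_word_def)

lemma psi_word_Cons: "psi_word a y (p # w) = (if snd p = y then [(fst p, a)] else []) @ psi_word a y w"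
  by (cases p) (simp add: psi_word_def)

lemma psi_word_append: "psi_word a y (u @ v) = psi_word a y u @ psi_word a y v"
  by (simp add: psi_word_def)

lemma reduce_psi_word_red_cons: "reduce (psi_word a y (red_cons p v)) = reduce (psi_word a y (p # v))"
proof (cases v)
  case Nil
  then show ?thesis by (simp add: red_cons_def)
next
  case (Cons q v')
  show ?thesis
  proof (cases "cancels p q")
    case False
    then show ?thesis using Cons by (simp add: red_cons_def)
  next
    case True
    then have q: "q = (\<not> fst p, snd p)" by (cases p; cases q) (auto simp: cancels_def)
    have "reduce (psi_word a y (p # q # v')) = reduce (psi_word a y v')"
      using q by (simp add: psi_word_Cons reduce_Cons red_cons_cancel cancels_def reduced_reduce)
    then show ?thesis using Cons True by (simp add: red_cons_def)
  qed
qed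

lemma reduce_psi_word_reduce: "reduce (psi_word a y (reduce w)) = reduce (psi_word a y w)"
proof (induction w)
  case Nil
  then show ?case by (simp add: reduce_def psi_word_def)
next
  case (Cons p w)
  have "reduce (psi_word a y (reduce (p # w))) = reduce (psi_word a y (p # reduce w))"
    by (simp add: reduce_Cons reduce_psi_word_red_cons)
  also have "\<dots> = reduce (psi_word a y (p # w))"
    by (metis Cons psi_word_Cons reduce_append_reduce)
  finally show ?case .
qed

lemma reduced_psi: "reduced (psi a y w)"
  by (simp add: psi_eq_reduce_psi_word reduced_reduce)

lemma set_psi: "snd ` set (psi a y w) \<subseteq> {a}"
  using set_reduce_subset[of "psi_word a y w"]
  by (auto simp: psi_eq_reduce_psi_word psi_word_def split: if_splits)

lemma psi_hom: "a \<in> S \<Longrightarrow> psi a y \<in> hom (free_grp S) (free_grp S)"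
  using set_psi[of a y] reduced_psi[of a y]
  by (fastforce simp: hom_def free_grp_simps psi_eq_reduce_psi_word reduce_psi_word_reduce
      psi_word_append reduce_reduce_append reduce_append_reduce)

lemma psi_gen: "psi a y (gen x) = (if x = y then gen a else [])"
  by (simp add: psi_def gen_def reduce_def red_cons_def)

lemma psi_psi: "a \<noteq> y \<Longrightarrow> psi a y (psi a z w) = []"
proof -
  assume "a \<noteq> y"
  then have vanish: "psi_word a y u = []" if "snd ` set u \<subseteq> {a}" for u
    using that by (induction u) (auto simp: psi_word_Cons psi_word_def)
  show ?thesis
    unfolding psi_eq_reduce_psi_word[of a y] vanish[OF set_psi] by (simp add: reduce_def)
qed

lemma psi_images_commute:
  "a \<in> S \<Longrightarrow> psi a y u \<otimes>\<^bsub>free_grp S\<^esub> psi a z v = psi a z v \<otimes>\<^bsub>free_grp S\<^esub> psi a y u"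
  by (rule words_in_letter_commute[OF _ reduced_psi set_psi reduced_psi set_psi])

section \<open>Operations twisted by an endomorphism\<close>

definition twisted_mult :: "('g, 'm) monoid_scheme \<Rightarrow> ('g \<Rightarrow> 'g) \<Rightarrow> 'g \<Rightarrow> 'g \<Rightarrow> 'g" where
  "twisted_mult G p g h = g \<otimes>\<^bsub>G\<^esub> p g \<otimes>\<^bsub>G\<^esub> h \<otimes>\<^bsub>G\<^esub> inv\<^bsub>G\<^esub> (p g)"

definition twisted_inv :: "('g, 'm) monoid_scheme \<Rightarrow> ('g \<Rightarrow> 'g) \<Rightarrow> 'g \<Rightarrow> 'g" where
  "twisted_inv G p g = inv\<^bsub>G\<^esub> (p g) \<otimes>\<^bsub>G\<^esub> inv\<^bsub>G\<^esub> g \<otimes>\<^bsub>G\<^esub> p g"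

lemma grp_of_simps: "carrier (grp_of S f) = S" "x \<otimes>\<^bsub>grp_of S f\<^esub> y = f x y"
  by (simp_all add: grp_of_def)

context group
begin

lemma endo_simps:
  assumes "p \<in> hom G G" "x \<in> carrier G" "y \<in> carrier G"
  shows "p x \<in> carrier G" "p (x \<otimes> y) = p x \<otimes> p y" "p (inv x) = inv (p x)" "p \<one> = \<one>"
proof -
  interpret group_hom G G p using assms(1) by (simp add: group_hom_def group_hom_axioms_def is_group)
  show "p x \<in> carrier G" "p (x \<otimes> y) = p x \<otimes> p y" "p (inv x) = inv (p x)" "p \<one> = \<one>"
    using assms by auto
qed

lemma inv_mult_cancel_assoc: "x \<in> carrier G \<Longrightarrow> y \<in> carrier G \<Longrightarrow> inv x \<otimes> (x \<otimes> y) = y"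
  by (simp add: m_assoc[symmetric])

lemma mult_inv_cancel_assoc: "x \<in> carrier G \<Longrightarrow> y \<in> carrier G \<Longrightarrow> x \<otimes> (inv x \<otimes> y) = y"
  by (simp add: m_assoc[symmetric])

lemma twisted_mult_closed:
  "p \<in> hom G G \<Longrightarrow> g \<in> carrier G \<Longrightarrow> h \<in> carrier G \<Longrightarrow> twisted_mult G p g h \<in> carrier G"
  by (simp add: twisted_mult_def endo_simps)

lemma twisted_inv_closed: "p \<in> hom G G \<Longrightarrow> g \<in> carrier G \<Longrightarrow> twisted_inv G p g \<in> carrier G"
  by (simp add: twisted_inv_def endo_simps)

lemma endo_twisted_mult:
  assumes p: "p \<in> hom G G" and q: "q \<in> hom G G" and pq: "\<forall>x\<in>carrier G. p (q x) = \<one>"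
    and "g \<in> carrier G" "h \<in> carrier G"
  shows "p (twisted_mult G q g h) = p g \<otimes> p h"
  using assms(4,5) by (simp add: twisted_mult_def endo_simps[OF p] endo_simps[OF q] pq)

lemma endo_twisted_inv:
  assumes p: "p \<in> hom G G" and pp: "\<forall>x\<in>carrier G. p (p x) = \<one>" and "g \<in> carrier G"
  shows "p (twisted_inv G p g) = inv (p g)"
  using assms(3) by (simp add: twisted_inv_def endo_simps[OF p] pp)

lemma twisted_mult_one_left: "p \<in> hom G G \<Longrightarrow> h \<in> carrier G \<Longrightarrow> twisted_mult G p \<one> h = h"
  by (simp add: twisted_mult_def endo_simps)

lemma twisted_mult_one_right: "p \<in> hom G G \<Longrightarrow> h \<in> carrier G \<Longrightarrow> twisted_mult G p h \<one> = h"
  by (simp add: twisted_mult_def endo_simps m_assoc)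

lemma twisted_mult_assoc:
  assumes p: "p \<in> hom G G" and pp: "\<forall>x\<in>carrier G. p (p x) = \<one>"
    and g: "g \<in> carrier G" and h: "h \<in> carrier G" and k: "k \<in> carrier G"
  shows "twisted_mult G p (twisted_mult G p g h) k = twisted_mult G p g (twisted_mult G p h k)"
  using g h k endo_twisted_mult[OF p p pp g h]
  by (simp add: twisted_mult_def endo_simps[OF p] m_assoc inv_mult_group inv_mult_cancel_assoc)

lemma twisted_inv_mult:
  assumes p: "p \<in> hom G G" and pp: "\<forall>x\<in>carrier G. p (p x) = \<one>" and g: "g \<in> carrier G"
  shows "twisted_mult G p (twisted_inv G p g) g = \<one>"
  using g by (simp add: twisted_mult_def endo_twisted_inv[OF p pp g])
    (simp add: twisted_inv_def endo_simps[OF p] m_assoc)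

lemma one_grp_of_twisted_mult:
  assumes p: "p \<in> hom G G"
  shows "\<one>\<^bsub>grp_of (carrier G) (twisted_mult G p)\<^esub> = \<one>"
proof -
  have "(THE e. e \<in> carrier G \<and> (\<forall>x\<in>carrier G. twisted_mult G p e x = x \<and> twisted_mult G p x e = x))
    = \<one>"
    by (rule the_equality) (auto simp: twisted_mult_one_left[OF p] twisted_mult_one_right[OF p]
        dest: bspec[of _ _ \<one>])
  then show ?thesis by (simp add: grp_of_def)
qed

lemma group_grp_of_twisted_mult:
  assumes p: "p \<in> hom G G" and pp: "\<forall>x\<in>carrier G. p (p x) = \<one>"
  shows "group (grp_of (carrier G) (twisted_mult G p))"
proof (rule groupI)
  fix x assume "x \<in> carrier (grp_of (carrier G) (twisted_mult G p))"
  then show "\<exists>y\<in>carrier (grp_of (carrier G) (twisted_mult G p)).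
      y \<otimes>\<^bsub>grp_of (carrier G) (twisted_mult G p)\<^esub> x = \<one>\<^bsub>grp_of (carrier G) (twisted_mult G p)\<^esub>"
    using twisted_inv_mult[OF p pp] twisted_inv_closed[OF p] one_grp_of_twisted_mult[OF p]
    by (auto simp: grp_of_simps)
qed (simp_all add: grp_of_simps one_grp_of_twisted_mult[OF p] twisted_mult_closed[OF p]
    twisted_mult_assoc[OF p pp] twisted_mult_one_left[OF p])

lemma inv_grp_of_twisted_mult:
  assumes p: "p \<in> hom G G" and pp: "\<forall>x\<in>carrier G. p (p x) = \<one>" and g: "g \<in> carrier G"
  shows "inv\<^bsub>grp_of (carrier G) (twisted_mult G p)\<^esub> g = twisted_inv G p g"
  using twisted_inv_mult[OF p pp g] one_grp_of_twisted_mult[OF p] g twisted_inv_closed[OF p g]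
  by (intro group.inv_equality[OF group_grp_of_twisted_mult[OF p pp]]) (simp_all add: grp_of_simps)

text \<open>The skew brace identity for two twisted operations, after expanding both sides, with
  \<open>s = p g\<close>, \<open>t = p h\<close>, \<open>f = q g\<close>.\<close>

lemma skew_brace_word_identity:
  assumes carr: "g \<in> carrier G" "h \<in> carrier G" "k \<in> carrier G"
      "s \<in> carrier G" "t \<in> carrier G" "f \<in> carrier G"
    and st: "s \<otimes> t = t \<otimes> s" and tf: "t \<otimes> f = f \<otimes> t"
  shows "g \<otimes> f \<otimes> h \<otimes> inv f \<otimes> (s \<otimes> t) \<otimes> (inv s \<otimes> inv g \<otimes> s) \<otimes> inv (s \<otimes> t) \<otimes> t
           \<otimes> (g \<otimes> f \<otimes> k \<otimes> inv f) \<otimes> inv t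
         = g \<otimes> f \<otimes> (h \<otimes> t \<otimes> k \<otimes> inv t) \<otimes> inv f"
proof -
  have conj_t: "s \<otimes> (t \<otimes> (inv s \<otimes> r)) = t \<otimes> r" if "r \<in> carrier G" for r
  proof -
    have "s \<otimes> (t \<otimes> (inv s \<otimes> r)) = (s \<otimes> t) \<otimes> (inv s \<otimes> r)"
      using that carr by (simp add: m_assoc)
    also have "\<dots> = t \<otimes> (s \<otimes> (inv s \<otimes> r))"
      unfolding st using that carr by (simp add: m_assoc)
    finally show ?thesis using that carr by (simp add: mult_inv_cancel_assoc)
  qed
  have conj_f: "inv f \<otimes> (t \<otimes> (f \<otimes> r)) = t \<otimes> r" if "r \<in> carrier G" for r
  proof -
    have "inv f \<otimes> (t \<otimes> (f \<otimes> r)) = inv f \<otimes> ((f \<otimes> t) \<otimes> r)"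
      unfolding tf[symmetric] using that carr by (simp add: m_assoc)
    then show ?thesis using that carr by (simp add: m_assoc inv_mult_cancel_assoc)
  qed
  have inv_st: "inv (s \<otimes> t) = inv s \<otimes> inv t"
    using carr st by (metis inv_mult_group)
  have inv_tf: "inv f \<otimes> inv t = inv t \<otimes> inv f"
    using carr tf by (metis inv_mult_group)
  have "g \<otimes> f \<otimes> h \<otimes> inv f \<otimes> (s \<otimes> t) \<otimes> (inv s \<otimes> inv g \<otimes> s) \<otimes> inv (s \<otimes> t) \<otimes> t
           \<otimes> (g \<otimes> f \<otimes> k \<otimes> inv f) \<otimes> inv t
      = g \<otimes> (f \<otimes> (h \<otimes> (inv f \<otimes> (s \<otimes> (t \<otimes> (inv s \<otimes> (f \<otimes> (k \<otimes> (inv f \<otimes> inv t)))))))))"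
    using carr by (simp add: m_assoc inv_st inv_mult_cancel_assoc mult_inv_cancel_assoc)
  also have "\<dots> = g \<otimes> (f \<otimes> (h \<otimes> (inv f \<otimes> (t \<otimes> (f \<otimes> (k \<otimes> (inv f \<otimes> inv t)))))))"
    using carr by (simp add: conj_t)
  also have "\<dots> = g \<otimes> (f \<otimes> (h \<otimes> (t \<otimes> (k \<otimes> (inv f \<otimes> inv t)))))"
    using carr by (simp add: conj_f)
  also have "\<dots> = g \<otimes> f \<otimes> (h \<otimes> t \<otimes> k \<otimes> inv t) \<otimes> inv f"
    using carr by (simp add: inv_tf m_assoc)
  finally show ?thesis .
qed

lemma twisted_mult_skew_brace_eq:
  assumes p: "p \<in> hom G G" and q: "q \<in> hom G G"
    and pp: "\<forall>x\<in>carrier G. p (p x) = \<one>" and pq: "\<forall>x\<in>carrier G. p (q x) = \<one>"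
    and cpp: "\<forall>x\<in>carrier G. \<forall>y\<in>carrier G. p x \<otimes> p y = p y \<otimes> p x"
    and cpq: "\<forall>x\<in>carrier G. \<forall>y\<in>carrier G. p x \<otimes> q y = q y \<otimes> p x"
    and g: "g \<in> carrier G" and h: "h \<in> carrier G" and k: "k \<in> carrier G"
  shows "twisted_mult G q g (twisted_mult G p h k)
    = twisted_mult G p (twisted_mult G p (twisted_mult G q g h) (twisted_inv G p g)) (twisted_mult G q g k)"
proof -
  define u where "u = twisted_mult G q g h"
  define v where "v = twisted_mult G p u (twisted_inv G p g)"
  have u: "u \<in> carrier G" using twisted_mult_closed[OF q g h] by (simp add: u_def)
  have pu: "p u = p g \<otimes> p h" using endo_twisted_mult[OF p q pq g h] by (simp add: u_def)
  have "p v = p g \<otimes> p h \<otimes> inv (p g)"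
    using endo_twisted_mult[OF p p pp u twisted_inv_closed[OF p g]] endo_twisted_inv[OF p pp g] pu
    by (simp add: v_def)
  also have "\<dots> = p h \<otimes> p g \<otimes> inv (p g)"
    using cpp g h by metis
  also have "\<dots> = p h"
    using g h by (simp add: m_assoc endo_simps[OF p])
  finally have pv: "p v = p h" .
  have "twisted_mult G p v (twisted_mult G q g k)
      = v \<otimes> p h \<otimes> twisted_mult G q g k \<otimes> inv (p h)"
    by (simp add: twisted_mult_def pv)
  also have "\<dots> = g \<otimes> q g \<otimes> h \<otimes> inv (q g) \<otimes> (p g \<otimes> p h) \<otimes> (inv (p g) \<otimes> inv g \<otimes> p g)
      \<otimes> inv (p g \<otimes> p h) \<otimes> p h \<otimes> (g \<otimes> q g \<otimes> k \<otimes> inv (q g)) \<otimes> inv (p h)"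
    by (simp add: v_def twisted_mult_def[of G p u] pu,
        simp add: twisted_inv_def u_def twisted_mult_def[of G q])
  also have "\<dots> = twisted_mult G q g (twisted_mult G p h k)"
    using g h k cpp cpq
    by (simp add: skew_brace_word_identity endo_simps[OF p] endo_simps[OF q] twisted_mult_def)
  finally show ?thesis by (simp add: u_def v_def)
qed

lemma skew_brace_twisted_mult:
  assumes p: "p \<in> hom G G" and q: "q \<in> hom G G"
    and pp: "\<forall>x\<in>carrier G. p (p x) = \<one>" and pq: "\<forall>x\<in>carrier G. p (q x) = \<one>"
    and qq: "\<forall>x\<in>carrier G. q (q x) = \<one>"
    and cpp: "\<forall>x\<in>carrier G. \<forall>y\<in>carrier G. p x \<otimes> p y = p y \<otimes> p x"
    and cpq: "\<forall>x\<in>carrier G. \<forall>y\<in>carrier G. p x \<otimes> q y = q y \<otimes> p x"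
  shows "skew_brace (carrier G) (twisted_mult G p) (twisted_mult G q)"
  unfolding skew_brace_def is_group_op_def
  using group_grp_of_twisted_mult[OF p pp] group_grp_of_twisted_mult[OF q qq]
    twisted_mult_skew_brace_eq[OF p q pp pq cpp cpq] inv_grp_of_twisted_mult[OF p pp]
  by (simp add: grp_of_simps)

lemma brace_block_twisted_mult:
  assumes hom: "\<And>i. i \<in> I \<Longrightarrow> P i \<in> hom G G"
    and kill: "\<And>i j x. i \<in> I \<Longrightarrow> j \<in> I \<Longrightarrow> x \<in> carrier G \<Longrightarrow> P i (P j x) = \<one>"
    and comm: "\<And>i j x y. i \<in> I \<Longrightarrow> j \<in> I \<Longrightarrow> x \<in> carrier G \<Longrightarrow> y \<in> carrier G \<Longrightarrow>
      P i x \<otimes> P j y = P j y \<otimes> P i x"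
  shows "brace_block (carrier G) I (\<lambda>i. twisted_mult G (P i))"
  unfolding brace_block_def bi_skew_brace_def is_group_op_def
  using group_grp_of_twisted_mult hom kill comm skew_brace_twisted_mult by simp

end

theorem mainTheorem13:
  fixes X :: "'x set" and a :: 'x
  assumes "X \<noteq> {}" and "a \<notin> X"
  defines "G \<equiv> free_grp (insert a X)"
  defines "circ \<equiv> (\<lambda>y g h. g \<otimes>\<^bsub>G\<^esub> psi a y g \<otimes>\<^bsub>G\<^esub> h \<otimes>\<^bsub>G\<^esub> inv\<^bsub>G\<^esub> (psi a y g))"
  shows "group G
    \<and> (\<forall>y\<in>X. psi a y \<in> hom G G \<and> psi a y (gen y) = gen a \<and> psi a y (gen a) = \<one>\<^bsub>G\<^esub>
            \<and> (\<forall>x\<in>X - {y}. psi a y (gen x) = \<one>\<^bsub>G\<^esub>))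
    \<and> (brace_block (carrier G) X circ)
    \<and> (\<forall>y\<in>X. \<forall>x\<in>X - {y}. circ y (gen x) (gen x) = gen x \<otimes>\<^bsub>G\<^esub> gen x)
    \<and> (\<forall>y\<in>X. circ y (gen y) (gen y) = gen y \<otimes>\<^bsub>G\<^esub> gen a \<otimes>\<^bsub>G\<^esub> gen y \<otimes>\<^bsub>G\<^esub> inv\<^bsub>G\<^esub> (gen a)
              \<and> circ y (gen y) (gen y) \<noteq> gen y \<otimes>\<^bsub>G\<^esub> gen y)
    \<and> (\<forall>y\<in>X. \<forall>z\<in>X. y \<noteq> z \<longrightarrow> (\<exists>g\<in>carrier G. \<exists>h\<in>carrier G. circ y g h \<noteq> circ z g h))"
proof -
  have aS: "a \<in> insert a X" by simp
  have ya: "y \<noteq> a" if "y \<in> X" for y using that assms(2) by blast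
  have grp: "group G" unfolding G_def by (rule group_free_grp)
  interpret group G by (rule grp)
  have one: "\<one>\<^bsub>G\<^esub> = []" by (simp add: G_def free_grp_simps)
  have hom: "psi a y \<in> hom G G" for y unfolding G_def by (rule psi_hom[OF aS])
  have gen: "gen x \<in> carrier G" if "x \<in> insert a X" for x
    using that unfolding G_def by (rule gen_in_free_grp)
  have "circ = (\<lambda>y. twisted_mult G (psi a y))" by (simp add: circ_def twisted_mult_def fun_eq_iff)
  moreover have "brace_block (carrier G) X (\<lambda>y. twisted_mult G (psi a y))"
    using hom psi_psi[OF ya[THEN not_sym]] psi_images_commute[OF aS]
    by (intro brace_block_twisted_mult) (auto simp: G_def free_grp_simps)
  ultimately have block: "brace_block (carrier G) X circ" by simp
  have square_other: "circ y (gen x) (gen x) = gen x \<otimes>\<^bsub>G\<^esub> gen x" if "x \<noteq> y" "x \<in> X" for x y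
    using that gen[of x] by (simp add: circ_def psi_gen one[symmetric])
  have square_self: "circ y (gen y) (gen y) = gen y \<otimes>\<^bsub>G\<^esub> gen a \<otimes>\<^bsub>G\<^esub> gen y \<otimes>\<^bsub>G\<^esub> inv\<^bsub>G\<^esub> (gen a)"
    for y by (simp add: circ_def psi_gen)
  have square_self_ne: "circ y (gen y) (gen y) \<noteq> gen y \<otimes>\<^bsub>G\<^esub> gen y" if "y \<in> X" for y
    using ya[OF that] square_self[of y] inv_gen_free_grp[OF aS]
    by (simp add: G_def free_grp_simps gen_def reduce_def red_cons_def cancels_def)
  have distinct: "\<exists>g\<in>carrier G. \<exists>h\<in>carrier G. circ y g h \<noteq> circ z g h"
    if "y \<in> X" "z \<in> X" "y \<noteq> z" for y z
    using that gen[of y] square_self_ne[of y] square_other[of y z] by (metis insertCI)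
  show ?thesis
    using grp hom psi_gen[of a] one assms(2) block square_other square_self square_self_ne distinct
    by auto
qed

end
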